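(* Let $G$ and $H$ be finite simple connected graphs of order at least $3$. If the direct product $G \times H$ is well-dominated, then $\gamma(G \times H)=\gamma(G)\,n(H)=\gamma(H)\,n(G)$. Furthermore, $\gamma(G)=\alpha(G)$ and $\gamma(H)=\alpha(H)$.
   Context: $n(X)$ is the order of $X$; $\gamma(X)$ is the domination number (minimum size of a dominating set) and $\alpha(X)$ is the independence number (maximum size of an independent set). A graph is well-dominated if every minimal dominating set is a minimum dominating set. The direct product $G\times H$ has vertex set $V(G)\times V(H)$, with $(g_1,h_1)$ adjacent to $(g_2,h_2)$ iff $g_1g_2\in E(G)$ and $h_1h_2\in E(H)$. *)

theory Defs
  imports Main
begin

definition fin_simple_graph :: "'a set \<Rightarrow> ('a \<Rightarrow> 'a \<Rightarrow> bool) \<Rightarrow> bool" where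
  "fin_simple_graph V E \<longleftrightarrow> finite V \<and> (\<forall>x y. E x y \<longrightarrow> x \<in> V \<and> y \<in> V)
     \<and> (\<forall>x y. E x y \<longrightarrow> E y x) \<and> (\<forall>x. \<not> E x x)"

definition graph_connected :: "'a set \<Rightarrow> ('a \<Rightarrow> 'a \<Rightarrow> bool) \<Rightarrow> bool" where
  "graph_connected V E \<longleftrightarrow> V \<noteq> {} \<and> (\<forall>x\<in>V. \<forall>y\<in>V. (x, y) \<in> {(u, v). E u v}\<^sup>*)"

definition dominating :: "'a set \<Rightarrow> ('a \<Rightarrow> 'a \<Rightarrow> bool) \<Rightarrow> 'a set \<Rightarrow> bool" where
  "dominating V E D \<longleftrightarrow> D \<subseteq> V \<and> (\<forall>v\<in>V. v \<in> D \<or> (\<exists>d\<in>D. E v d))"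

definition independent :: "'a set \<Rightarrow> ('a \<Rightarrow> 'a \<Rightarrow> bool) \<Rightarrow> 'a set \<Rightarrow> bool" where
  "independent V E S \<longleftrightarrow> S \<subseteq> V \<and> (\<forall>x\<in>S. \<forall>y\<in>S. \<not> E x y)"

definition domination_number :: "'a set \<Rightarrow> ('a \<Rightarrow> 'a \<Rightarrow> bool) \<Rightarrow> nat" where
  "domination_number V E = (LEAST k. \<exists>D. dominating V E D \<and> card D = k)"

definition independence_number :: "'a set \<Rightarrow> ('a \<Rightarrow> 'a \<Rightarrow> bool) \<Rightarrow> nat" where
  "independence_number V E = (GREATEST k. \<exists>S. independent V E S \<and> card S = k)"

definition minimal_dominating :: "'a set \<Rightarrow> ('a \<Rightarrow> 'a \<Rightarrow> bool) \<Rightarrow> 'a set \<Rightarrow> bool" where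
  "minimal_dominating V E D \<longleftrightarrow> dominating V E D \<and> (\<forall>D'. D' \<subset> D \<longrightarrow> \<not> dominating V E D')"

definition well_dominated :: "'a set \<Rightarrow> ('a \<Rightarrow> 'a \<Rightarrow> bool) \<Rightarrow> bool" where
  "well_dominated V E \<longleftrightarrow>
     (\<forall>D. minimal_dominating V E D \<longrightarrow> card D = domination_number V E)"

definition direct_prod_edges ::
  "('a \<Rightarrow> 'a \<Rightarrow> bool) \<Rightarrow> ('b \<Rightarrow> 'b \<Rightarrow> bool) \<Rightarrow> ('a \<times> 'b) \<Rightarrow> ('a \<times> 'b) \<Rightarrow> bool" where
  "direct_prod_edges E F p q \<longleftrightarrow> E (fst p) (fst q) \<and> F (snd p) (snd q)"

end

theory Submission
  imports Defs
begin

text \<open>For a graph \<open>H\<close> without isolated vertices, every dominating set \<open>D\<close> of \<open>G\<close> lifts to the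
dominating set \<open>D \<times> V(H)\<close> of \<open>G \<times> H\<close>, and every maximal independent set \<open>I\<close> of \<open>G\<close> lifts to a
minimal dominating set \<open>I \<times> V(H)\<close>: a vertex \<open>(i, h)\<close> has no neighbour inside \<open>I \<times> V(H)\<close>, so
no proper subset dominates. If \<open>G \<times> H\<close> is well-dominated, all maximal independent sets of \<open>G\<close>
therefore have the same size \<open>a\<close> with \<open>a n(H) = \<gamma>(G \<times> H)\<close>; hence \<open>\<alpha>(G) = a\<close>, and
\<open>\<gamma>(G) \<le> a\<close> because maximal independent sets dominate, while
\<open>a n(H) = \<gamma>(G \<times> H) \<le> \<gamma>(G) n(H)\<close>. The statement for \<open>H\<close> follows by commutativity of the
direct product.\<close>

definition maximal_independent :: "'a set \<Rightarrow> ('a \<Rightarrow> 'a \<Rightarrow> bool) \<Rightarrow> 'a set \<Rightarrow> bool" where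
  "maximal_independent V E I \<longleftrightarrow> independent V E I \<and> (\<forall>x\<in>V - I. \<exists>i\<in>I. E x i)"

lemma domination_number_le_card: "dominating V E D \<Longrightarrow> domination_number V E \<le> card D"
  unfolding domination_number_def by (rule Least_le) blast

lemma domination_number_attained:
  obtains D where "dominating V E D" "card D = domination_number V E"
proof -
  have "dominating V E V"
    unfolding dominating_def by blast
  then have "\<exists>D. dominating V E D \<and> card D = domination_number V E"
    unfolding domination_number_def
    using LeastI_ex[of "\<lambda>k. \<exists>D. dominating V E D \<and> card D = k"] by blast
  with that show thesis by blast
qed

lemma connected_imp_no_isolated_vertex:
  assumes "fin_simple_graph V E" "graph_connected V E" "card V \<ge> 2" "v \<in> V"
  shows "\<exists>u\<in>V. E v u"
proof -
  obtain w where w: "w \<in> V" "w \<noteq> v"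
    using assms(3,4) card_le_Suc0_iff_eq[of V] by (cases "finite V") auto
  have "(v, w) \<in> {(x, y). E x y}\<^sup>*"
    using assms(2,4) w(1) unfolding graph_connected_def by blast
  then obtain u where "E v u"
    using w(2) by (cases rule: converse_rtranclE) auto
  with assms(1) show ?thesis
    unfolding fin_simple_graph_def by blast
qed

lemma maximal_independent_dominating: "maximal_independent V E I \<Longrightarrow> dominating V E I"
  unfolding maximal_independent_def independent_def dominating_def by blast

lemma independent_extends_to_maximal:
  assumes "fin_simple_graph V E" "independent V E S"
  obtains I where "S \<subseteq> I" "maximal_independent V E I"
proof -
  let ?F = "{T. S \<subseteq> T \<and> independent V E T}"
  have "?F \<subseteq> Pow V"
    unfolding independent_def by blast
  moreover have "finite V"
    using assms(1) unfolding fin_simple_graph_def by blast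
  ultimately have "finite ?F"
    by (simp add: finite_subset)
  moreover have "?F \<noteq> {}"
    using assms(2) by blast
  ultimately obtain I where I: "I \<in> ?F" and I_max: "\<forall>T\<in>?F. I \<subseteq> T \<longrightarrow> I = T"
    by (meson finite_has_maximal)
  then have "S \<subseteq> I" and I_indep: "independent V E I"
    by simp_all
  have "\<exists>i\<in>I. E x i" if x: "x \<in> V - I" for x
  proof (rule ccontr)
    assume "\<not> (\<exists>i\<in>I. E x i)"
    with I_indep x assms(1) have "independent V E (insert x I)"
      unfolding independent_def fin_simple_graph_def by blast
    with \<open>S \<subseteq> I\<close> I_max x show False by blast
  qed
  with \<open>S \<subseteq> I\<close> I_indep show thesis
    using that unfolding maximal_independent_def by blast
qed

lemma independence_number_eq_if_well_covered:
  assumes "fin_simple_graph V E" "\<And>I. maximal_independent V E I \<Longrightarrow> card I = a"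
  shows "independence_number V E = a"
proof -
  have "finite V"
    using assms(1) unfolding fin_simple_graph_def by blast
  have card_le: "card S \<le> a" if S: "independent V E S" for S
  proof -
    obtain I where "S \<subseteq> I" "maximal_independent V E I"
      using independent_extends_to_maximal[OF assms(1) S] .
    moreover have "finite I"
      using \<open>maximal_independent V E I\<close> \<open>finite V\<close>
      unfolding maximal_independent_def independent_def by (blast intro: finite_subset)
    ultimately show ?thesis
      using assms(2) card_mono by metis
  qed
  have "independent V E {}"
    unfolding independent_def by blast
  then obtain I where "maximal_independent V E I"
    using independent_extends_to_maximal[OF assms(1)] by blast
  then have "independent V E I" "card I = a"
    using assms(2) unfolding maximal_independent_def by auto
  then show ?thesis
    unfolding independence_number_def by (intro Greatest_equality) (blast, use card_le in blast)
qed

lemma dominating_direct_prod_left: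
  assumes "\<forall>h\<in>VH. \<exists>h'\<in>VH. EH h h'" "dominating VG EG D"
  shows "dominating (VG \<times> VH) (direct_prod_edges EG EH) (D \<times> VH)"
  using assms unfolding dominating_def direct_prod_edges_def by fastforce

lemma minimal_dominating_direct_prod_left:
  assumes "\<forall>h\<in>VH. \<exists>h'\<in>VH. EH h h'" "maximal_independent VG EG I"
  shows "minimal_dominating (VG \<times> VH) (direct_prod_edges EG EH) (I \<times> VH)"
  unfolding minimal_dominating_def
proof (intro conjI allI impI)
  show "dominating (VG \<times> VH) (direct_prod_edges EG EH) (I \<times> VH)"
    using assms by (intro dominating_direct_prod_left maximal_independent_dominating)
  have indep: "independent VG EG I"
    using assms(2) unfolding maximal_independent_def by blast
  fix D' assume "D' \<subset> I \<times> VH"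
  then obtain p where p: "p \<in> I \<times> VH" "p \<notin> D'" by blast
  show "\<not> dominating (VG \<times> VH) (direct_prod_edges EG EH) D'"
  proof
    assume "dominating (VG \<times> VH) (direct_prod_edges EG EH) D'"
    then obtain d where "d \<in> D'" "direct_prod_edges EG EH p d"
      using p indep unfolding dominating_def independent_def by blast
    with \<open>D' \<subset> I \<times> VH\<close> p indep show False
      unfolding direct_prod_edges_def independent_def by auto
  qed
qed

lemma dominating_direct_prod_swap:
  assumes "dominating (VG \<times> VH) (direct_prod_edges EG EH) D"
  shows "dominating (VH \<times> VG) (direct_prod_edges EH EG) (prod.swap ` D)"
  using assms unfolding dominating_def by (force simp: direct_prod_edges_def)

lemma minimal_dominating_direct_prod_swap:
  assumes "minimal_dominating (VG \<times> VH) (direct_prod_edges EG EH) D"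
  shows "minimal_dominating (VH \<times> VG) (direct_prod_edges EH EG) (prod.swap ` D)"
  unfolding minimal_dominating_def
proof (intro conjI allI impI notI)
  show "dominating (VH \<times> VG) (direct_prod_edges EH EG) (prod.swap ` D)"
    using assms unfolding minimal_dominating_def by (blast intro: dominating_direct_prod_swap)
  fix D' assume "D' \<subset> prod.swap ` D" "dominating (VH \<times> VG) (direct_prod_edges EH EG) D'"
  have "prod.swap ` D' \<subset> prod.swap ` prod.swap ` D"
    using \<open>D' \<subset> prod.swap ` D\<close> by (intro image_strict_mono) simp_all
  moreover have "dominating (VG \<times> VH) (direct_prod_edges EG EH) (prod.swap ` D')"
    using dominating_direct_prod_swap[OF \<open>dominating (VH \<times> VG) _ D'\<close>] .
  ultimately show False
    using assms unfolding minimal_dominating_def by (simp add: image_image)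
qed

lemma domination_number_direct_prod_swap_le:
  "domination_number (VH \<times> VG) (direct_prod_edges EH EG)
     \<le> domination_number (VG \<times> VH) (direct_prod_edges EG EH)"
proof -
  obtain D where "dominating (VG \<times> VH) (direct_prod_edges EG EH) D"
      and "card D = domination_number (VG \<times> VH) (direct_prod_edges EG EH)"
    using domination_number_attained .
  then show ?thesis
    using domination_number_le_card[OF dominating_direct_prod_swap[of VG VH EG EH D]]
    by (simp add: card_image)
qed

lemma domination_number_direct_prod_commute:
  "domination_number (VH \<times> VG) (direct_prod_edges EH EG)
     = domination_number (VG \<times> VH) (direct_prod_edges EG EH)"
  by (intro antisym domination_number_direct_prod_swap_le)

lemma well_dominated_direct_prod_commute:
  assumes "well_dominated (VG \<times> VH) (direct_prod_edges EG EH)"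
  shows "well_dominated (VH \<times> VG) (direct_prod_edges EH EG)"
  unfolding well_dominated_def
proof (intro allI impI)
  fix D assume "minimal_dominating (VH \<times> VG) (direct_prod_edges EH EG) D"
  then have "card (prod.swap ` D) = domination_number (VG \<times> VH) (direct_prod_edges EG EH)"
    using assms minimal_dominating_direct_prod_swap unfolding well_dominated_def by blast
  also have "\<dots> = domination_number (VH \<times> VG) (direct_prod_edges EH EG)"
    by (rule domination_number_direct_prod_commute [symmetric])
  finally show "card D = domination_number (VH \<times> VG) (direct_prod_edges EH EG)"
    by (simp add: card_image)
qed

lemma well_dominated_direct_prod_left:
  assumes G: "fin_simple_graph VG EG"
    and H: "card VH > 0" "\<forall>h\<in>VH. \<exists>h'\<in>VH. EH h h'"
    and wd: "well_dominated (VG \<times> VH) (direct_prod_edges EG EH)"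
  shows "domination_number (VG \<times> VH) (direct_prod_edges EG EH) = domination_number VG EG * card VH
    \<and> domination_number VG EG = independence_number VG EG"
proof -
  let ?\<gamma>GH = "domination_number (VG \<times> VH) (direct_prod_edges EG EH)"
  have "independent VG EG {}"
    unfolding independent_def by blast
  then obtain I0 where I0: "maximal_independent VG EG I0"
    using independent_extends_to_maximal[OF G] by blast
  have lift_card: "card I * card VH = ?\<gamma>GH" if "maximal_independent VG EG I" for I
  proof -
    have "card (I \<times> VH) = ?\<gamma>GH"
      using wd minimal_dominating_direct_prod_left[OF H(2) that]
      unfolding well_dominated_def by blast
    then show ?thesis
      by (simp add: card_cartesian_product)
  qed
  have well_covered: "card I = card I0" if "maximal_independent VG EG I" for I
  proof -
    have "card I * card VH = card I0 * card VH"
      using lift_card[OF that] lift_card[OF I0] by simp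
    with H(1) show ?thesis by simp
  qed
  have \<alpha>: "independence_number VG EG = card I0"
    using independence_number_eq_if_well_covered[OF G well_covered] .
  have "domination_number VG EG \<le> card I0"
    using domination_number_le_card[OF maximal_independent_dominating[OF I0]] .
  moreover have "card I0 \<le> domination_number VG EG"
  proof -
    obtain D where D: "dominating VG EG D" "card D = domination_number VG EG"
      using domination_number_attained .
    have "card I0 * card VH \<le> card D * card VH"
      using domination_number_le_card[OF dominating_direct_prod_left[OF H(2) D(1)]] lift_card[OF I0]
      by (simp add: card_cartesian_product)
    with D(2) H(1) show ?thesis by simp
  qed
  ultimately show ?thesis
    using \<alpha> lift_card[OF I0] by simp
qed

theorem lemma10:
  fixes VG :: "'a set" and EG :: "'a \<Rightarrow> 'a \<Rightarrow> bool"
    and VH :: "'b set" and EH :: "'b \<Rightarrow> 'b \<Rightarrow> bool"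
  assumes "fin_simple_graph VG EG" and "graph_connected VG EG" and "card VG \<ge> 3"
    and "fin_simple_graph VH EH" and "graph_connected VH EH" and "card VH \<ge> 3"
    and "well_dominated (VG \<times> VH) (direct_prod_edges EG EH)"
  shows "domination_number (VG \<times> VH) (direct_prod_edges EG EH)
           = domination_number VG EG * card VH
       \<and> domination_number VG EG * card VH = domination_number VH EH * card VG
       \<and> domination_number VG EG = independence_number VG EG
       \<and> domination_number VH EH = independence_number VH EH"
proof -
  have "\<forall>g\<in>VG. \<exists>g'\<in>VG. EG g g'"
    using assms(1-3) by (auto intro: connected_imp_no_isolated_vertex)
  moreover have "\<forall>h\<in>VH. \<exists>h'\<in>VH. EH h h'"
    using assms(4-6) by (auto intro: connected_imp_no_isolated_vertex)
  moreover have "card VG > 0" "card VH > 0"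
    using assms(3,6) by simp_all
  ultimately have
    "domination_number (VG \<times> VH) (direct_prod_edges EG EH) = domination_number VG EG * card VH
       \<and> domination_number VG EG = independence_number VG EG"
    "domination_number (VH \<times> VG) (direct_prod_edges EH EG) = domination_number VH EH * card VG
       \<and> domination_number VH EH = independence_number VH EH"
    using well_dominated_direct_prod_left[OF assms(1) _ _ assms(7)]
      well_dominated_direct_prod_left[OF assms(4) _ _ well_dominated_direct_prod_commute[OF assms(7)]]
    by blast+
  then show ?thesis
    using domination_number_direct_prod_commute[of VH VG EH EG] by simp
qed

end
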